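(* Let $X$ be a real Hilbert space, $I=\{1,\dots,m\}$, and $(T_i)_{i\in I}$ nonexpansive operators $X\to X$ with $Z_i=\operatorname{Fix}T_i$ and $Z=\bigcap_iZ_i$. Suppose there is $z\in Z$ such that each $T_i$ is projective with respect to $z$, and that $(Z_i)_{i\in I}$ is boundedly regular. Then $T=T_m\cdots T_2T_1$ is projective with respect to $z$, and for every $x_0\in X$ the sequence $(T^nx_0)_{n\in\mathbb N}$ converges strongly to some point of $Z$.
   Context: A nonexpansive $T$ with $z\in\operatorname{Fix}T$ is projective with respect to $z$ if for every bounded sequence $(x_n)$ with $\|x_n-z\|-\|Tx_n-z\|\to0$ we have $d_{\operatorname{Fix}T}(x_n)\to0$. A finite family $(C_i)$ of closed convex sets with $C=\bigcap_iC_i\ne\varnothing$ is boundedly regular if for every bounded sequence $(x_n)$, $\max_id_{C_i}(x_n)\to0$ implies $d_C(x_n)\to0$. *)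

theory Defs
  imports "HOL-Analysis.Analysis"
begin

definition nonexpansive :: "('a::real_normed_vector \<Rightarrow> 'a) \<Rightarrow> bool" where
  "nonexpansive T \<longleftrightarrow> (\<forall>x y. norm (T x - T y) \<le> norm (x - y))"

definition Fix :: "('a \<Rightarrow> 'a) \<Rightarrow> 'a set" where
  "Fix T = {x. T x = x}"

definition projective_wrt :: "('a::real_normed_vector \<Rightarrow> 'a) \<Rightarrow> 'a \<Rightarrow> bool" where
  "projective_wrt T z \<longleftrightarrow> nonexpansive T \<and> z \<in> Fix T \<and>
     (\<forall>x::nat \<Rightarrow> 'a. bounded (range x) \<longrightarrow>
        ((\<lambda>n. norm (x n - z) - norm (T (x n) - z)) \<longlonglongrightarrow> 0) \<longrightarrow>
        ((\<lambda>n. infdist (x n) (Fix T)) \<longlonglongrightarrow> 0))"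

definition boundedly_regular :: "'i set \<Rightarrow> ('i \<Rightarrow> 'a::real_normed_vector set) \<Rightarrow> bool" where
  "boundedly_regular I C \<longleftrightarrow> finite I \<and> I \<noteq> {} \<and>
     (\<forall>i\<in>I. closed (C i) \<and> convex (C i)) \<and> (\<Inter>i\<in>I. C i) \<noteq> {} \<and>
     (\<forall>x::nat \<Rightarrow> 'a. bounded (range x) \<longrightarrow>
        ((\<lambda>n. Max ((\<lambda>i. infdist (x n) (C i)) ` I)) \<longlonglongrightarrow> 0) \<longrightarrow>
        ((\<lambda>n. infdist (x n) (\<Inter>i\<in>I. C i)) \<longlonglongrightarrow> 0))"

fun comp_ops :: "(nat \<Rightarrow> 'a \<Rightarrow> 'a) \<Rightarrow> nat \<Rightarrow> 'a \<Rightarrow> 'a" where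
  "comp_ops T 0 = id"
| "comp_ops T (Suc k) = T (Suc k) \<circ> comp_ops T k"

end

theory Submission
  imports Defs
begin

text \<open>Write \<open>S = T\<^sub>m \<circ> \<dots> \<circ> T\<^sub>1\<close> and \<open>Z = \<Inter>\<^sub>i Fix T\<^sub>i\<close>. For a point moving from \<open>x\<close>
  towards \<open>z\<close>, the decrease \<open>\<parallel>x - z\<parallel> - \<parallel>S x - z\<parallel>\<close> is the sum of the (nonnegative) decreases
  caused by the individual factors. If it tends to zero along a bounded sequence, so does each
  summand; projectivity of the factors, propagated inductively through the product, then makes
  the sequence approach every \<open>Fix T\<^sub>i\<close>, and bounded regularity makes it approach \<open>Z\<close>.
  Applied to constant sequences this shows \<open>Fix S = Z\<close>, so \<open>S\<close> is projective.
  The orbit of a projective operator is Fejer monotone with respect to its fixed point set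
  and approaches that set, hence it is Cauchy and converges to a fixed point.\<close>

lemma nonexpansive_dist_le: "nonexpansive T \<Longrightarrow> dist (T x) (T y) \<le> dist x y"
  by (simp add: nonexpansive_def dist_norm)

lemma nonexpansive_norm_diff_Fix_le:
  assumes "nonexpansive T" "z \<in> Fix T"
  shows "norm (T x - z) \<le> norm (x - z)"
  using assms nonexpansive_dist_le[of T x z] by (simp add: Fix_def dist_norm)

lemma closed_Fix_nonexpansive:
  assumes "nonexpansive T"
  shows "closed (Fix T)"
proof -
  have "1-lipschitz_on UNIV T"
    using nonexpansive_dist_le[OF assms] by (intro lipschitz_onI) auto
  then have "continuous_on UNIV T"
    by (rule lipschitz_on_continuous_on)
  then show ?thesis
    unfolding Fix_def by (intro closed_Collect_eq continuous_on_id)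
qed

lemma norm_displacement_le_infdist_Fix:
  assumes "nonexpansive T" "Fix T \<noteq> {}"
  shows "norm (T x - x) \<le> 2 * infdist x (Fix T)"
proof -
  have "norm (T x - x) / 2 \<le> infdist x (Fix T)"
    unfolding infdist_notempty[OF assms(2)]
  proof (rule cINF_greatest[OF assms(2)])
    fix q assume "q \<in> Fix T"
    then have "norm (T x - q) \<le> norm (x - q)"
      by (rule nonexpansive_norm_diff_Fix_le[OF assms(1)])
    moreover have "norm (T x - x) \<le> norm (T x - q) + norm (x - q)"
      using norm_triangle_ineq4[of "T x - q" "x - q"] by simp
    ultimately show "norm (T x - x) / 2 \<le> dist x q"
      by (simp add: dist_norm)
  qed
  then show ?thesis by simp
qed

lemma nonexpansive_comp_ops:
  "(\<forall>i\<in>{1..k}. nonexpansive (T i)) \<Longrightarrow> nonexpansive (comp_ops T k)"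
proof (induction k)
  case 0
  then show ?case by (simp add: nonexpansive_def)
next
  case (Suc k)
  then have "nonexpansive (T (Suc k))" "nonexpansive (comp_ops T k)"
    by auto
  then show ?case
    unfolding nonexpansive_def by (metis comp_apply comp_ops.simps(2) order_trans)
qed

lemma Inter_Fix_subset_Fix_comp_ops: "(\<Inter>i\<in>{1..k}. Fix (T i)) \<subseteq> Fix (comp_ops T k)"
  by (induction k) (fastforce simp: Fix_def)+

lemma bounded_range_if_norm_diff_le:
  assumes "bounded (range x)" "\<And>n. norm (y n - z) \<le> norm (x n - z)"
  shows "bounded (range y)"
proof -
  obtain e where "\<forall>v\<in>range x. dist z v \<le> e"
    using assms(1) bounded_any_center by blast
  then have "\<forall>v\<in>range y. dist z v \<le> e"
    using assms(2) by (auto simp: dist_norm norm_minus_commute intro: order_trans)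
  then show ?thesis
    using bounded_any_center by blast
qed

lemma tendsto_zero_nonneg_addD:
  fixes a b :: "nat \<Rightarrow> real"
  assumes "\<And>n. 0 \<le> a n" "\<And>n. 0 \<le> b n" "(\<lambda>n. a n + b n) \<longlonglongrightarrow> 0"
  shows "a \<longlonglongrightarrow> 0" "b \<longlonglongrightarrow> 0"
  using assms by (auto intro!: Lim_null_comparison[OF always_eventually, of _ "\<lambda>n. a n + b n"])

lemma tendsto_Max_nonneg_zero:
  fixes f :: "'i \<Rightarrow> nat \<Rightarrow> real"
  assumes "finite I" "I \<noteq> {}" "\<And>i n. i \<in> I \<Longrightarrow> 0 \<le> f i n" "\<And>i. i \<in> I \<Longrightarrow> f i \<longlonglongrightarrow> 0"
  shows "(\<lambda>n. Max ((\<lambda>i. f i n) ` I)) \<longlonglongrightarrow> 0"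
proof (rule Lim_null_comparison[OF always_eventually])
  show "\<forall>n. norm (Max ((\<lambda>i. f i n) ` I)) \<le> (\<Sum>i\<in>I. f i n)"
  proof
    fix n
    obtain j where "j \<in> I" using assms(2) by blast
    then have "0 \<le> Max ((\<lambda>i. f i n) ` I)"
      using assms(1) by (intro order_trans[OF assms(3) Max_ge]) auto
    moreover have "Max ((\<lambda>i. f i n) ` I) \<le> (\<Sum>i\<in>I. f i n)"
      using assms by (auto simp: Max_le_iff intro!: member_le_sum)
    ultimately show "norm (Max ((\<lambda>i. f i n) ` I)) \<le> (\<Sum>i\<in>I. f i n)"
      by simp
  qed
  show "(\<lambda>n. \<Sum>i\<in>I. f i n) \<longlonglongrightarrow> 0"
    using tendsto_sum[of I f "\<lambda>_. 0"] assms(4) by simp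
qed

lemma projective_displacement_tendsto_zero:
  assumes "projective_wrt S z" "bounded (range y)"
    and "(\<lambda>n. norm (y n - z) - norm (S (y n) - z)) \<longlonglongrightarrow> 0"
  shows "(\<lambda>n. S (y n) - y n) \<longlonglongrightarrow> 0"
proof (rule Lim_null_comparison[OF always_eventually])
  have "nonexpansive S" "z \<in> Fix S"
    using assms(1) by (simp_all add: projective_wrt_def)
  then show "\<forall>n. norm (S (y n) - y n) \<le> 2 * infdist (y n) (Fix S)"
    using norm_displacement_le_infdist_Fix by blast
  have "(\<lambda>n. infdist (y n) (Fix S)) \<longlonglongrightarrow> 0"
    using assms unfolding projective_wrt_def by blast
  then show "(\<lambda>n. 2 * infdist (y n) (Fix S)) \<longlonglongrightarrow> 0"
    by (rule tendsto_mult_right_zero)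
qed

lemma infdist_tendsto_zero_if_asymptotic:
  fixes x y :: "nat \<Rightarrow> 'a::real_normed_vector"
  assumes "(\<lambda>n. infdist (y n) A) \<longlonglongrightarrow> 0" "(\<lambda>n. y n - x n) \<longlonglongrightarrow> 0"
  shows "(\<lambda>n. infdist (x n) A) \<longlonglongrightarrow> 0"
proof (rule Lim_null_comparison[OF always_eventually])
  show "\<forall>n. norm (infdist (x n) A) \<le> infdist (y n) A + norm (y n - x n)"
    using infdist_triangle[of _ A] by (simp add: infdist_nonneg dist_norm norm_minus_commute)
  show "(\<lambda>n. infdist (y n) A + norm (y n - x n)) \<longlonglongrightarrow> 0"
    using tendsto_add_zero[OF assms(1) tendsto_norm_zero[OF assms(2)]] .
qed

lemma comp_ops_decrease_tendsto_zeroD: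
  assumes proj: "\<forall>i\<in>{1..k}. projective_wrt (T i) z"
    and bounded: "bounded (range x)"
    and decrease: "(\<lambda>n. norm (x n - z) - norm (comp_ops T k (x n) - z)) \<longlonglongrightarrow> 0"
  shows "(\<forall>i\<in>{1..k}. (\<lambda>n. infdist (x n) (Fix (T i))) \<longlonglongrightarrow> 0) \<and>
    (\<lambda>n. comp_ops T k (x n) - x n) \<longlonglongrightarrow> 0"
  using proj decrease
proof (induction k)
  case (Suc k)
  define y where "y n = comp_ops T k (x n)" for n
  let ?S = "T (Suc k)"
  have pS: "projective_wrt ?S z" and proj_k: "\<forall>i\<in>{1..k}. projective_wrt (T i) z"
    using Suc.prems(1) by auto
  then have neS: "nonexpansive ?S" and zS: "z \<in> Fix ?S"
    by (auto simp: projective_wrt_def)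
  have "nonexpansive (comp_ops T k)"
    using proj_k by (intro nonexpansive_comp_ops) (simp add: projective_wrt_def)
  moreover have "z \<in> Fix (comp_ops T k)"
    using proj_k Inter_Fix_subset_Fix_comp_ops[where T = T and k = k]
    by (force simp: projective_wrt_def)
  ultimately have y_le: "norm (y n - z) \<le> norm (x n - z)" for n
    unfolding y_def by (rule nonexpansive_norm_diff_Fix_le)
  have "0 \<le> norm (x n - z) - norm (y n - z)" for n
    using y_le by simp
  moreover have "0 \<le> norm (y n - z) - norm (?S (y n) - z)" for n
    using nonexpansive_norm_diff_Fix_le[OF neS zS] by simp
  moreover have "(\<lambda>n. (norm (x n - z) - norm (y n - z)) + (norm (y n - z) - norm (?S (y n) - z)))
      \<longlonglongrightarrow> 0"
    using Suc.prems(2) by (simp add: y_def)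
  ultimately have dec_x: "(\<lambda>n. norm (x n - z) - norm (y n - z)) \<longlonglongrightarrow> 0"
    and dec_y: "(\<lambda>n. norm (y n - z) - norm (?S (y n) - z)) \<longlonglongrightarrow> 0"
    by (fact tendsto_zero_nonneg_addD)+
  have IH: "\<forall>i\<in>{1..k}. (\<lambda>n. infdist (x n) (Fix (T i))) \<longlonglongrightarrow> 0"
    "(\<lambda>n. y n - x n) \<longlonglongrightarrow> 0"
    using Suc.IH[OF proj_k] dec_x by (simp_all add: y_def)
  have bounded_y: "bounded (range y)"
    using bounded y_le by (rule bounded_range_if_norm_diff_le)
  then have "(\<lambda>n. infdist (y n) (Fix ?S)) \<longlonglongrightarrow> 0"
    using pS dec_y unfolding projective_wrt_def by blast
  then have infdist_x: "(\<lambda>n. infdist (x n) (Fix ?S)) \<longlonglongrightarrow> 0"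
    using IH(2) by (rule infdist_tendsto_zero_if_asymptotic)
  have "(\<lambda>n. (?S (y n) - y n) + (y n - x n)) \<longlonglongrightarrow> 0"
    using projective_displacement_tendsto_zero[OF pS bounded_y dec_y] IH(2)
    by (rule tendsto_add_zero)
  then have displacement: "(\<lambda>n. comp_ops T (Suc k) (x n) - x n) \<longlonglongrightarrow> 0"
    by (simp add: y_def)
  have "{1..Suc k} = insert (Suc k) {1..k}"
    by auto
  then show ?case
    using IH(1) infdist_x displacement by simp
qed simp

lemma comp_ops_decrease_tendsto_zero_infdist_Inter:
  assumes "\<forall>i\<in>{1..m}. projective_wrt (T i) z"
    and "boundedly_regular {1..m} (\<lambda>i. Fix (T i))"
    and "bounded (range x)"
    and "(\<lambda>n. norm (x n - z) - norm (comp_ops T m (x n) - z)) \<longlonglongrightarrow> 0"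
  shows "(\<lambda>n. infdist (x n) (\<Inter>i\<in>{1..m}. Fix (T i))) \<longlonglongrightarrow> 0"
proof -
  have "(\<lambda>n. Max ((\<lambda>i. infdist (x n) (Fix (T i))) ` {1..m})) \<longlonglongrightarrow> 0"
    using assms(2) conjunct1[OF comp_ops_decrease_tendsto_zeroD[OF assms(1,3,4)]]
    by (intro tendsto_Max_nonneg_zero) (auto simp: boundedly_regular_def infdist_nonneg)
  with assms(2,3) show ?thesis
    unfolding boundedly_regular_def by blast
qed

lemma Fejer_monotone_convergent:
  fixes x :: "nat \<Rightarrow> 'a::{metric_space, complete_space}"
  assumes "closed Z" "Z \<noteq> {}"
    and Fejer: "\<And>q n. q \<in> Z \<Longrightarrow> dist (x (Suc n)) q \<le> dist (x n) q"
    and approach: "(\<lambda>n. infdist (x n) Z) \<longlonglongrightarrow> 0"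
  shows "\<exists>p\<in>Z. x \<longlonglongrightarrow> p"
proof -
  have mono: "dist (x k) q \<le> dist (x j) q" if "q \<in> Z" "j \<le> k" for q j k
    using Fejer[OF that(1)] decseqD[of "\<lambda>n. dist (x n) q"] that(2)
    by (simp add: decseq_Suc_iff)
  have "Cauchy x"
  proof (rule metric_CauchyI)
    fix e :: real assume "e > 0"
    then obtain M where "\<forall>n\<ge>M. norm (infdist (x n) Z - 0) < e / 2"
      using LIMSEQ_D[OF approach, of "e / 2"] by auto
    then have M: "infdist (x M) Z < e / 2"
      by (metis abs_ge_self diff_zero le_refl order_le_less_trans real_norm_def)
    have "dist (x a) (x b) < e" if "M \<le> a" "M \<le> b" for a b
    proof -
      have "dist (x a) (x b) / 2 \<le> infdist (x M) Z"
        unfolding infdist_notempty[OF assms(2)]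
      proof (rule cINF_greatest[OF assms(2)])
        fix q assume "q \<in> Z"
        then show "dist (x a) (x b) / 2 \<le> dist (x M) q"
          using dist_triangle2[of "x a" "x b" q] mono[of q M a] mono[of q M b] that by simp
      qed
      with M show ?thesis by simp
    qed
    then show "\<exists>M. \<forall>a\<ge>M. \<forall>b\<ge>M. dist (x a) (x b) < e" by blast
  qed
  then obtain p where p: "x \<longlonglongrightarrow> p"
    using Cauchy_convergent_iff convergent_def by blast
  have "infdist p Z = 0"
    using LIMSEQ_unique[OF tendsto_infdist[OF p] approach] .
  with assms(1,2) p show ?thesis
    using in_closed_iff_infdist_zero by blast
qed

lemma projective_iterates_convergent:
  fixes S :: "'a::{real_normed_vector, complete_space} \<Rightarrow> 'a"
  assumes proj: "projective_wrt S z"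
  shows "\<exists>p\<in>Fix S. (\<lambda>n. (S ^^ n) x0) \<longlonglongrightarrow> p"
proof -
  define x where "x = (\<lambda>n. (S ^^ n) x0)"
  have ne: "nonexpansive S" and zS: "z \<in> Fix S"
    using proj by (auto simp: projective_wrt_def)
  have Fejer: "dist (x (Suc n)) q \<le> dist (x n) q" if "q \<in> Fix S" for q n
    using nonexpansive_norm_diff_Fix_le[OF ne that] by (simp add: x_def dist_norm)
  then have "decseq (\<lambda>n. norm (x n - z))"
    using zS by (simp add: decseq_Suc_iff dist_norm)
  then obtain L where "(\<lambda>n. norm (x n - z)) \<longlonglongrightarrow> L"
    using decseq_convergent[of _ 0] by (metis norm_ge_zero)
  from tendsto_diff[OF this LIMSEQ_Suc[OF this]]
  have "(\<lambda>n. norm (x n - z) - norm (S (x n) - z)) \<longlonglongrightarrow> 0"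
    by (simp add: x_def)
  moreover have "bounded (range x)"
  proof (rule bounded_range_if_norm_diff_le)
    show "norm (x n - z) \<le> norm ((\<lambda>_. x 0) n - z)" for n
      using \<open>decseq _\<close> by (simp add: decseq_def)
  qed simp
  ultimately have "(\<lambda>n. infdist (x n) (Fix S)) \<longlonglongrightarrow> 0"
    using proj unfolding projective_wrt_def by blast
  then have "\<exists>p\<in>Fix S. x \<longlonglongrightarrow> p"
    using Fejer zS closed_Fix_nonexpansive[OF ne] by (intro Fejer_monotone_convergent) auto
  then show ?thesis by (simp add: x_def)
qed

theorem proposition7p8:
  fixes T :: "nat \<Rightarrow> 'a::{real_inner, complete_space} \<Rightarrow> 'a"
    and m :: nat and z :: 'a
  assumes "m \<ge> 1"
    and "\<forall>i\<in>{1..m}. nonexpansive (T i)"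
    and "z \<in> (\<Inter>i\<in>{1..m}. Fix (T i))"
    and "\<forall>i\<in>{1..m}. projective_wrt (T i) z"
    and "boundedly_regular {1..m} (\<lambda>i. Fix (T i))"
  shows "projective_wrt (comp_ops T m) z \<and>
         (\<forall>x0. \<exists>p\<in>(\<Inter>i\<in>{1..m}. Fix (T i)).
                 (\<lambda>n. (comp_ops T m ^^ n) x0) \<longlonglongrightarrow> p)"
proof -
  define Z where "Z = (\<Inter>i\<in>{1..m}. Fix (T i))"
  define S where "S = comp_ops T m"
  have approach: "(\<lambda>n. infdist (x n) Z) \<longlonglongrightarrow> 0"
    if "bounded (range x)" "(\<lambda>n. norm (x n - z) - norm (S (x n) - z)) \<longlonglongrightarrow> 0" for x
    using comp_ops_decrease_tendsto_zero_infdist_Inter[OF assms(4,5) that[unfolded S_def]]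
    by (simp add: Z_def)
  have "Fix S \<subseteq> Z"
  proof
    fix p assume "p \<in> Fix S"
    then have "(\<lambda>n. infdist p Z) \<longlonglongrightarrow> 0"
      using approach[of "\<lambda>_. p"] by (simp add: Fix_def)
    moreover have "closed Z" "Z \<noteq> {}"
      using assms(5) by (auto simp: Z_def boundedly_regular_def)
    ultimately show "p \<in> Z"
      using in_closed_iff_infdist_zero LIMSEQ_const_iff by blast
  qed
  then have Fix_S: "Fix S = Z"
    using Inter_Fix_subset_Fix_comp_ops[where T = T and k = m] unfolding S_def Z_def by blast
  have "projective_wrt S z"
    unfolding projective_wrt_def Fix_S
    using nonexpansive_comp_ops[OF assms(2)] assms(3) approach by (simp add: S_def Z_def)
  with projective_iterates_convergent[of S z] Fix_S show ?thesis
    by (simp add: S_def Z_def)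
qed

end
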